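(* Assume (F), fix $\alpha\in\,]0,1[$, and let $0\le u^+<u^-\le V$ with $\hat\rho_{u^-}\le\check\rho_{u^+}$. Then $$u^--u^+\ \ge\ \frac{\beta}{2}\,\big(\hat\rho_{u^-}-\check\rho_{u^-}\big).$$
   Context: Hypothesis (F): $R>0$; $f\in C^2([0,R];[0,+\infty))$ with $f(\rho)=\rho v(\rho)$, $v\in C^2([0,R];[0,+\infty))$; $f(0)=f(R)=0$; there are $B\ge\beta>0$ with $-B\le f''\le-\beta$ on $[0,R]$; $v'(\rho)<0$ for $\rho\in\,]0,R[$. Let $V:=\max_{[0,R]}v=v(0)$. Define $f_\alpha(\rho):=\alpha f(\rho/\alpha)$ for $\rho\in[0,\alpha R]$. For $u\in[0,V]$: $\tilde\rho_u$ is the unique solution of $f_\alpha'(\rho)=u$; $\varphi_u(\rho):=f_\alpha(\tilde\rho_u)+u(\rho-\tilde\rho_u)$ for $\rho\in[0,R]$; $\mathcal I_u:=\{\rho\in[0,R]: f(\rho)=\varphi_u(\rho)\}$, $\check\rho_u:=\min\mathcal I_u$, $\hat\rho_u:=\max\mathcal I_u$. *)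

theory Defs
  imports "HOL-Analysis.Analysis"
begin

definition falpha :: "real \<Rightarrow> (real \<Rightarrow> real) \<Rightarrow> real \<Rightarrow> real" where
  "falpha \<alpha> f \<rho> = \<alpha> * f (\<rho> / \<alpha>)"

definition rho_tilde :: "real \<Rightarrow> real \<Rightarrow> (real \<Rightarrow> real) \<Rightarrow> real \<Rightarrow> real" where
  "rho_tilde \<alpha> R f u = (THE \<rho>. \<rho> \<in> {0..\<alpha>*R} \<and>
      (falpha \<alpha> f has_real_derivative u) (at \<rho> within {0..\<alpha>*R}))"

definition phi :: "real \<Rightarrow> real \<Rightarrow> (real \<Rightarrow> real) \<Rightarrow> real \<Rightarrow> real \<Rightarrow> real" where
  "phi \<alpha> R f u \<rho> = falpha \<alpha> f (rho_tilde \<alpha> R f u) + u * (\<rho> - rho_tilde \<alpha> R f u)"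

definition Iset :: "real \<Rightarrow> real \<Rightarrow> (real \<Rightarrow> real) \<Rightarrow> real \<Rightarrow> real set" where
  "Iset \<alpha> R f u = {\<rho> \<in> {0..R}. f \<rho> = phi \<alpha> R f u \<rho>}"

definition rho_check :: "real \<Rightarrow> real \<Rightarrow> (real \<Rightarrow> real) \<Rightarrow> real \<Rightarrow> real" where
  "rho_check \<alpha> R f u = Inf (Iset \<alpha> R f u)"

definition rho_hat :: "real \<Rightarrow> real \<Rightarrow> (real \<Rightarrow> real) \<Rightarrow> real \<Rightarrow> real" where
  "rho_hat \<alpha> R f u = Sup (Iset \<alpha> R f u)"

end

theory Submission
  imports Defs
begin

text \<open>
  Since \<open>f'' \<le> -\<beta>\<close>, every tangent line of \<open>f\<close> lies above \<open>f\<close> by at least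
  \<open>\<beta>/2\<close> times the squared distance to the point of tangency. The contact points
  \<open>a = rho_check u\<^sup>-\<close> and \<open>b = rho_hat u\<^sup>-\<close> lie on a line of slope \<open>u\<^sup>-\<close>, so the
  tangent at \<open>b\<close> evaluated at \<open>a\<close> gives \<open>f'(b) \<le> u\<^sup>- - \<beta>/2 (b - a)\<close>. At
  \<open>c = rho_check u\<^sup>+\<close> the graph of \<open>f\<close> meets the line \<open>\<phi>\<^bsub>u\<^sup>+\<^esub>\<close> for the first time,
  coming from below since \<open>f(0) = 0 \<le> \<phi>\<^bsub>u\<^sup>+\<^esub>(0)\<close>; hence \<open>f'(c) \<ge> u\<^sup>+\<close>.
  As \<open>b \<le> c\<close> and \<open>f'\<close> is decreasing, \<open>u\<^sup>+ \<le> f'(c) \<le> f'(b)\<close>.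
\<close>

lemma increment_le_of_derivative_le:
  fixes g g' :: "real \<Rightarrow> real"
  assumes g: "\<forall>t\<in>S. (g has_real_derivative g' t) (at t within S)"
    and "{x..y} \<subseteq> S" "x \<le> y" and le: "\<forall>t\<in>{x..y}. g' t \<le> c"
  shows "g y - g x \<le> c * (y - x)"
proof (cases "x = y")
  case False
  have "\<forall>t\<in>{x..y}. (g has_real_derivative g' t) (at t within {x..y})"
    using g assms(2) by (blast intro: DERIV_subset)
  then obtain z where z: "z \<in> {x<..<y}" "g y - g x = g' z * (y - x)"
    using mvt_simple[of x y g "\<lambda>t h. g' t * h"] False \<open>x \<le> y\<close>
    by (auto simp: has_field_derivative_def)
  then show ?thesis
    using le \<open>x \<le> y\<close> by (auto intro!: mult_right_mono)
qed simp

lemma derivative_nonneg_at_right_max: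
  fixes g :: "real \<Rightarrow> real"
  assumes g: "(g has_real_derivative D) (at c within {a..c})" and "a < c"
    and max: "\<forall>y\<in>{a..<c}. g y \<le> g c"
  shows "0 \<le> D"
proof (rule tendsto_lowerbound)
  show "((\<lambda>y. (g y - g c) / (y - c)) \<longlongrightarrow> D) (at c within {a..c})"
    using g by (simp add: has_field_derivative_iff)
  show "\<forall>\<^sub>F y in at c within {a..c}. 0 \<le> (g y - g c) / (y - c)"
    using max unfolding eventually_at_filter
    by (intro always_eventually) (auto intro!: divide_nonpos_neg)
  show "at c within {a..c} \<noteq> bot"
    using \<open>a < c\<close> by (simp add: trivial_limit_within)
qed

lemma strongly_concave_tangent_bound:
  fixes f f' :: "real \<Rightarrow> real"
  assumes f: "\<forall>t\<in>{a..b}. (f has_real_derivative f' t) (at t within {a..b})"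
    and dec: "\<And>s t. s \<in> {a..b} \<Longrightarrow> t \<in> {a..b} \<Longrightarrow> s \<le> t \<Longrightarrow> f' t - f' s \<le> - \<beta> * (t - s)"
    and x: "x \<in> {a..b}" and y: "y \<in> {a..b}"
  shows "f y \<le> f x + f' x * (y - x) - \<beta> / 2 * (y - x)\<^sup>2"
proof -
  define k where "k t = f t - f' x * (t - x) + \<beta> / 2 * (t - x)\<^sup>2" for t
  have k: "\<forall>t\<in>{a..b}. (k has_real_derivative f' t - f' x + \<beta> * (t - x)) (at t within {a..b})"
    unfolding k_def using f by (auto intro!: derivative_eq_intros)
  have "k y \<le> k x"
  proof (cases "x \<le> y")
    case True
    have "\<forall>t\<in>{x..y}. f' t - f' x + \<beta> * (t - x) \<le> 0"
    proof
      fix t assume "t \<in> {x..y}"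
      then show "f' t - f' x + \<beta> * (t - x) \<le> 0"
        using dec[OF x, of t] x y by auto
    qed
    then have "k y - k x \<le> 0 * (y - x)"
      using x y True by (intro increment_le_of_derivative_le[OF k]) auto
    then show ?thesis by simp
  next
    case False
    have "\<forall>t\<in>{a..b}. ((\<lambda>t. - k t) has_real_derivative - (f' t - f' x + \<beta> * (t - x))) (at t within {a..b})"
      using k DERIV_minus by blast
    moreover have "\<forall>t\<in>{y..x}. - (f' t - f' x + \<beta> * (t - x)) \<le> 0"
    proof
      fix t assume "t \<in> {y..x}"
      then show "- (f' t - f' x + \<beta> * (t - x)) \<le> 0"
        using dec[OF _ x, of t] x y by (auto simp: algebra_simps)
    qed
    ultimately have "- k x - - k y \<le> 0 * (x - y)"
      using x y False by (intro increment_le_of_derivative_le) auto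
    then show ?thesis by simp
  qed
  then show ?thesis by (simp add: k_def)
qed

locale strongly_concave_flux =
  fixes R \<beta> \<alpha> :: real and f f1 f2 v :: "real \<Rightarrow> real"
  assumes R_pos: "0 < R" and \<beta>_pos: "0 < \<beta>" and \<alpha>_pos: "0 < \<alpha>" and \<alpha>_lt_1: "\<alpha> < 1"
    and f_deriv: "\<forall>x\<in>{0..R}. (f has_real_derivative f1 x) (at x within {0..R})"
    and f1_deriv: "\<forall>x\<in>{0..R}. (f1 has_real_derivative f2 x) (at x within {0..R})"
    and f2_le: "\<forall>x\<in>{0..R}. f2 x \<le> - \<beta>"
    and f_eq: "\<forall>x\<in>{0..R}. f x = x * v x"
    and v_cont: "continuous (at 0 within {0..R}) v"
    and f_R: "f R = 0"
begin

lemma f_0: "f 0 = 0"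
  using f_eq R_pos by simp

lemma continuous_on_f: "continuous_on {0..R} f"
  using f_deriv by (intro DERIV_continuous_on) auto

lemma continuous_on_f1: "continuous_on {0..R} f1"
  using f1_deriv by (intro DERIV_continuous_on) auto

lemma f1_decrease:
  assumes "x \<in> {0..R}" "y \<in> {0..R}" "x \<le> y"
  shows "f1 y - f1 x \<le> - \<beta> * (y - x)"
  using assms f2_le by (intro increment_le_of_derivative_le[OF f1_deriv]) auto

lemma f1_antimono:
  assumes "x \<in> {0..R}" "y \<in> {0..R}" "x \<le> y"
  shows "f1 y \<le> f1 x"
proof -
  have "0 \<le> \<beta> * (y - x)"
    using assms \<beta>_pos by simp
  then show ?thesis
    using f1_decrease[OF assms] by linarith
qed

lemma inj_on_f1: "inj_on f1 {0..R}"
proof (rule linorder_inj_onI')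
  fix x y assume "x \<in> {0..R}" "y \<in> {0..R}" "x < y"
  moreover have "0 < \<beta> * (y - x)"
    using \<open>x < y\<close> \<beta>_pos by simp
  ultimately show "f1 x \<noteq> f1 y"
    using f1_decrease[of x y] by auto
qed

lemma tangent_bound_strong:
  assumes "x \<in> {0..R}" "y \<in> {0..R}"
  shows "f y \<le> f x + f1 x * (y - x) - \<beta> / 2 * (y - x)\<^sup>2"
  using strongly_concave_tangent_bound[OF f_deriv f1_decrease assms] .

lemma tangent_bound:
  assumes "x \<in> {0..R}" "y \<in> {0..R}"
  shows "f y \<le> f x + f1 x * (y - x)"
proof -
  have "0 \<le> \<beta> / 2 * (y - x)\<^sup>2"
    using \<beta>_pos by simp
  then show ?thesis
    using tangent_bound_strong[OF assms] by linarith
qed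

lemma f1_0: "f1 0 = v 0"
proof (rule tendsto_unique)
  show "at 0 within {0..R} \<noteq> bot"
    using R_pos by (simp add: trivial_limit_within)
  show "((\<lambda>y. (f y - f 0) / y) \<longlongrightarrow> f1 0) (at 0 within {0..R})"
    using f_deriv R_pos has_field_derivative_iff[of f "f1 0" 0 "{0..R}"] by auto
  have "\<forall>\<^sub>F y in at 0 within {0..R}. v y = (f y - f 0) / y"
    using f_eq f_0 unfolding eventually_at_filter by (intro always_eventually) auto
  then show "((\<lambda>y. (f y - f 0) / y) \<longlongrightarrow> v 0) (at 0 within {0..R})"
    using v_cont by (auto simp: continuous_within intro: Lim_transform_eventually)
qed

lemma f1_R_neg: "f1 R < 0"
proof -
  obtain z where z: "z \<in> {0<..<R}" "f R - f 0 = f1 z * (R - 0)"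
    using mvt_simple[of 0 R f "\<lambda>t h. f1 t * h"] R_pos f_deriv
    by (auto simp: has_field_derivative_def)
  then have "f1 z = 0"
    using f_0 f_R R_pos by simp
  moreover have "0 < \<beta> * (R - z)"
    using z \<beta>_pos by simp
  ultimately show ?thesis
    using f1_decrease[of z R] z by auto
qed

lemma slope_point_exists:
  assumes "u \<in> {0..v 0}"
  obtains s where "s \<in> {0..R}" "f1 s = u"
  using IVT2'[of f1 R u 0, OF _ _ _ continuous_on_f1] f1_R_neg f1_0 assms R_pos by force

lemma falpha_has_real_derivative:
  assumes "\<rho> \<in> {0..\<alpha> * R}"
  shows "(falpha \<alpha> f has_real_derivative f1 (\<rho> / \<alpha>)) (at \<rho> within {0..\<alpha> * R})"
proof -
  have "(f has_real_derivative f1 (\<rho> / \<alpha>)) (at (\<rho> / \<alpha>) within {0..R})"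
    using f_deriv assms \<alpha>_pos by (simp add: field_simps)
  then have "(f has_real_derivative f1 (\<rho> / \<alpha>)) (at (\<rho> / \<alpha>) within (\<lambda>x. x / \<alpha>) ` {0..\<alpha> * R})"
    by (rule DERIV_subset) (use \<alpha>_pos in \<open>auto simp: field_simps\<close>)
  moreover have "((\<lambda>x. x / \<alpha>) has_real_derivative 1 / \<alpha>) (at \<rho> within {0..\<alpha> * R})"
    using \<alpha>_pos by (auto intro!: derivative_eq_intros)
  ultimately have "(f \<circ> (\<lambda>x. x / \<alpha>) has_real_derivative f1 (\<rho> / \<alpha>) * (1 / \<alpha>)) (at \<rho> within {0..\<alpha> * R})"
    by (rule DERIV_image_chain)
  from DERIV_cmult[OF this, of \<alpha>] show ?thesis
    using \<alpha>_pos by (simp add: falpha_def[abs_def] o_def)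
qed

lemma rho_tilde_eq:
  assumes s: "s \<in> {0..R}" "f1 s = u"
  shows "rho_tilde \<alpha> R f u = \<alpha> * s"
  unfolding rho_tilde_def
proof (rule the_equality)
  show "\<alpha> * s \<in> {0..\<alpha> * R} \<and> (falpha \<alpha> f has_real_derivative u) (at (\<alpha> * s) within {0..\<alpha> * R})"
    using falpha_has_real_derivative[of "\<alpha> * s"] s \<alpha>_pos by auto
next
  fix \<rho> assume \<rho>: "\<rho> \<in> {0..\<alpha> * R} \<and> (falpha \<alpha> f has_real_derivative u) (at \<rho> within {0..\<alpha> * R})"
  have "at \<rho> within {0..\<alpha> * R} \<noteq> bot"
    using \<rho> \<alpha>_pos R_pos by (simp add: trivial_limit_within)
  then have "f1 (\<rho> / \<alpha>) = f1 s"
    using has_field_derivative_unique[OF falpha_has_real_derivative] \<rho> s by blast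
  moreover have "\<rho> / \<alpha> \<in> {0..R}"
    using \<rho> \<alpha>_pos by (auto simp: field_simps)
  ultimately have "\<rho> / \<alpha> = s"
    using inj_on_f1 s by (auto dest: inj_onD)
  then show "\<rho> = \<alpha> * s"
    using \<alpha>_pos by (auto simp: field_simps)
qed

lemma phi_eq:
  assumes "s \<in> {0..R}" "f1 s = u"
  shows "phi \<alpha> R f u \<rho> = \<alpha> * f s + u * (\<rho> - \<alpha> * s)"
  using rho_tilde_eq[OF assms] \<alpha>_pos by (simp add: phi_def falpha_def)

lemma phi_diff: "phi \<alpha> R f u x - phi \<alpha> R f u y = u * (x - y)"
  by (simp add: phi_def algebra_simps)

lemma f_0_le_phi:
  assumes "u \<in> {0..v 0}"
  shows "f 0 \<le> phi \<alpha> R f u 0"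
proof -
  obtain s where s: "s \<in> {0..R}" "f1 s = u"
    using slope_point_exists[OF assms] .
  have "0 \<le> f s - u * s"
    using tangent_bound[OF s(1), of 0] s f_0 R_pos by auto
  moreover have "phi \<alpha> R f u 0 = \<alpha> * (f s - u * s)"
    using phi_eq[OF s] by (simp add: algebra_simps)
  ultimately show ?thesis
    using f_0 \<alpha>_pos by simp
qed

text \<open>\<open>\<phi>\<^sub>u(\<alpha> s) = \<alpha> f(s)\<close>, while concavity on \<open>[0, s]\<close> gives \<open>f(\<alpha> s) \<ge> \<alpha> f(s) + (1 - \<alpha>) f(0)\<close>.\<close>

lemma phi_le_f_at_tangency:
  assumes s: "s \<in> {0..R}" "f1 s = u"
  shows "phi \<alpha> R f u (\<alpha> * s) \<le> f (\<alpha> * s)"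
proof -
  define t where "t = \<alpha> * s"
  have t: "t \<in> {0..R}"
    using s \<alpha>_pos \<alpha>_lt_1 mult_left_le_one_le[of s \<alpha>] by (auto simp: t_def)
  have "\<alpha> * f s \<le> \<alpha> * (f t + f1 t * (s - t))"
    using tangent_bound[OF t s(1)] \<alpha>_pos by simp
  moreover have "0 \<le> (1 - \<alpha>) * (f t + f1 t * (0 - t))"
    using tangent_bound[OF t, of 0] f_0 R_pos \<alpha>_lt_1 by simp
  ultimately have "\<alpha> * f s \<le> f t"
    by (simp add: t_def algebra_simps)
  then show ?thesis
    using phi_eq[OF s] by (simp add: t_def)
qed

lemma continuous_on_f_minus_phi: "continuous_on {0..R} (\<lambda>\<rho>. f \<rho> - phi \<alpha> R f u \<rho>)"
  unfolding phi_def by (intro continuous_intros continuous_on_f)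

lemma Iset_nonempty:
  assumes "u \<in> {0..v 0}"
  shows "Iset \<alpha> R f u \<noteq> {}"
proof -
  obtain s where s: "s \<in> {0..R}" "f1 s = u"
    using slope_point_exists[OF assms] .
  have t: "\<alpha> * s \<in> {0..R}"
    using s \<alpha>_pos \<alpha>_lt_1 mult_left_le_one_le[of s \<alpha>] by auto
  obtain x where "0 \<le> x" "x \<le> \<alpha> * s" "f x - phi \<alpha> R f u x = 0"
    using IVT'[of "\<lambda>\<rho>. f \<rho> - phi \<alpha> R f u \<rho>" 0 0 "\<alpha> * s"]
      f_0_le_phi[OF assms] phi_le_f_at_tangency[OF s] t
      continuous_on_subset[OF continuous_on_f_minus_phi, of "{0..\<alpha> * s}"]
    by auto
  then have "x \<in> Iset \<alpha> R f u"
    using t by (auto simp: Iset_def)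
  then show ?thesis by auto
qed

lemma compact_Iset: "compact (Iset \<alpha> R f u)"
  unfolding compact_eq_bounded_closed
proof
  have "Iset \<alpha> R f u = {0..R} \<inter> (\<lambda>\<rho>. f \<rho> - phi \<alpha> R f u \<rho>) -` {0}"
    by (auto simp: Iset_def)
  then show "closed (Iset \<alpha> R f u)"
    using continuous_closed_preimage[OF continuous_on_f_minus_phi closed_atLeastAtMost closed_singleton]
    by simp
  show "bounded (Iset \<alpha> R f u)"
    by (rule bounded_subset[of "{0..R}"]) (auto simp: Iset_def)
qed

lemma rho_check_in_Iset:
  assumes "u \<in> {0..v 0}"
  shows "rho_check \<alpha> R f u \<in> Iset \<alpha> R f u"
  unfolding rho_check_def using compact_Iset Iset_nonempty[OF assms]
  by (intro closed_contains_Inf bounded_imp_bdd_below compact_imp_bounded compact_imp_closed)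

lemma rho_hat_in_Iset:
  assumes "u \<in> {0..v 0}"
  shows "rho_hat \<alpha> R f u \<in> Iset \<alpha> R f u"
  unfolding rho_hat_def using compact_Iset Iset_nonempty[OF assms]
  by (intro closed_contains_Sup bounded_imp_bdd_above compact_imp_bounded compact_imp_closed)

lemma rho_check_le:
  assumes "x \<in> Iset \<alpha> R f u"
  shows "rho_check \<alpha> R f u \<le> x"
  unfolding rho_check_def using compact_Iset assms
  by (intro cInf_lower bounded_imp_bdd_below compact_imp_bounded)

lemma slope_at_later_contact_le:
  assumes x: "x \<in> Iset \<alpha> R f u" and y: "y \<in> Iset \<alpha> R f u" and "x < y"
  shows "f1 y \<le> u - \<beta> / 2 * (y - x)"
proof -
  have "f x - f y = u * (x - y)"
    using x y phi_diff[of u x y] by (simp add: Iset_def)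
  moreover have "f x \<le> f y + f1 y * (x - y) - \<beta> / 2 * (x - y)\<^sup>2"
    using tangent_bound_strong[of y x] x y by (simp add: Iset_def)
  moreover have "(y - x) * (f1 y - u + \<beta> / 2 * (y - x))
      = u * (x - y) - (f1 y * (x - y) - \<beta> / 2 * (x - y)\<^sup>2)"
    by (simp add: field_simps power2_eq_square)
  ultimately have "(y - x) * (f1 y - u + \<beta> / 2 * (y - x)) \<le> 0"
    by linarith
  then show ?thesis
    using \<open>x < y\<close> by (simp add: mult_le_0_iff)
qed

lemma slope_at_first_contact_ge:
  assumes u: "u \<in> {0..v 0}" and c_pos: "0 < rho_check \<alpha> R f u"
  shows "u \<le> f1 (rho_check \<alpha> R f u)"
proof -
  define c where "c = rho_check \<alpha> R f u"
  define g where "g \<rho> = f \<rho> - phi \<alpha> R f u \<rho>" for \<rho>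
  have c: "c \<in> {0..R}" "g c = 0"
    using rho_check_in_Iset[OF u] by (auto simp: Iset_def c_def g_def)
  have below: "\<forall>y\<in>{0..<c}. g y \<le> g c"
  proof (rule ballI, rule ccontr)
    fix y assume y: "y \<in> {0..<c}" and "\<not> g y \<le> g c"
    then obtain x where x: "0 \<le> x" "x \<le> y" "g x = 0"
      using IVT'[of g 0 0 y] f_0_le_phi[OF u] c
        continuous_on_subset[OF continuous_on_f_minus_phi, of "{0..y}" u]
      by (auto simp: g_def)
    then have "x \<in> Iset \<alpha> R f u"
      using y c by (auto simp: Iset_def g_def)
    then have "c \<le> x"
      unfolding c_def by (rule rho_check_le)
    then show False
      using x y by simp
  qed
  have "(f has_real_derivative f1 c) (at c within {0..R})"
    using f_deriv c by blast
  then have "(f has_real_derivative f1 c) (at c within {0..c})"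
    by (rule DERIV_subset) (use c in auto)
  then have "(g has_real_derivative f1 c - u) (at c within {0..c})"
    unfolding g_def phi_def by (auto intro!: derivative_eq_intros)
  from derivative_nonneg_at_right_max[OF this _ below] show ?thesis
    using c_pos by (simp add: c_def)
qed

end

theorem mainTheorem4:
  fixes R \<beta> B \<alpha> up um :: real
    and f f1 f2 v v1 v2 :: "real \<Rightarrow> real"
  assumes R_pos: "R > 0"
    and f_d1: "\<forall>x\<in>{0..R}. (f has_real_derivative f1 x) (at x within {0..R})"
    and f_d2: "\<forall>x\<in>{0..R}. (f1 has_real_derivative f2 x) (at x within {0..R})"
    and f_c2: "continuous_on {0..R} f2"
    and v_d1: "\<forall>x\<in>{0..R}. (v has_real_derivative v1 x) (at x within {0..R})"
    and v_d2: "\<forall>x\<in>{0..R}. (v1 has_real_derivative v2 x) (at x within {0..R})"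
    and v_c2: "continuous_on {0..R} v2"
    and f_nonneg: "\<forall>x\<in>{0..R}. f x \<ge> 0"
    and v_nonneg: "\<forall>x\<in>{0..R}. v x \<ge> 0"
    and f_eq: "\<forall>x\<in>{0..R}. f x = x * v x"
    and f0: "f 0 = 0" and fR: "f R = 0"
    and \<beta>_pos: "\<beta> > 0" and B_ge: "B \<ge> \<beta>"
    and f2_bounds: "\<forall>x\<in>{0..R}. - B \<le> f2 x \<and> f2 x \<le> - \<beta>"
    and v1_neg: "\<forall>x\<in>{0<..<R}. v1 x < 0"
    and \<alpha>: "\<alpha> \<in> {0<..<1}"
    and u_bounds: "0 \<le> up" "up < um" "um \<le> v 0"
    and rho_ord: "rho_hat \<alpha> R f um \<le> rho_check \<alpha> R f up"
  shows "um - up \<ge> \<beta> / 2 * (rho_hat \<alpha> R f um - rho_check \<alpha> R f um)"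
proof -
  interpret strongly_concave_flux R \<beta> \<alpha> f f1 f2 v
    using R_pos \<beta>_pos \<alpha> f_d1 f_d2 f2_bounds f_eq fR DERIV_continuous[of v "v1 0" 0 "{0..R}"] v_d1
    by unfold_locales auto
  define a b c where "a = rho_check \<alpha> R f um" and "b = rho_hat \<alpha> R f um"
    and "c = rho_check \<alpha> R f up"
  have um: "um \<in> {0..v 0}" and up: "up \<in> {0..v 0}"
    using u_bounds by auto
  show ?thesis
  proof (cases "a < b")
    case False
    then have "\<beta> / 2 * (b - a) \<le> 0"
      using \<beta>_pos by (simp add: mult_nonneg_nonpos)
    then show ?thesis
      using u_bounds by (simp add: a_def b_def)
  next
    case True
    have a: "a \<in> Iset \<alpha> R f um" and b: "b \<in> Iset \<alpha> R f um"
      using rho_check_in_Iset[OF um] rho_hat_in_Iset[OF um] by (simp_all add: a_def b_def)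
    then have "f1 b \<le> um - \<beta> / 2 * (b - a)"
      using slope_at_later_contact_le True by blast
    moreover have "0 < c" and "b \<le> c" and "c \<le> R"
      using True a b rho_ord rho_check_in_Iset[OF up] by (auto simp: Iset_def a_def b_def c_def)
    then have "up \<le> f1 c"
      using slope_at_first_contact_ge[OF up] by (simp add: c_def)
    moreover have "f1 c \<le> f1 b"
      using f1_antimono \<open>b \<le> c\<close> \<open>c \<le> R\<close> b by (auto simp: Iset_def)
    ultimately show ?thesis
      by (simp add: a_def b_def)
  qed
qed

end
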